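(* Assume source and target traces are related via ${\sim}=\langle \overset{\circ}{\sim},\overset{\bullet}{\sim}\rangle$, i.e. $s\sim t\iff s^\circ\overset{\circ}{\sim}t^\circ \wedge s^\bullet\overset{\bullet}{\sim}t^\bullet$, where $\overset{\circ}{\sim}$ and $\overset{\bullet}{\sim}$ are both total maps from target to source (input, resp. output) projections, and $\overset{\circ}{\sim}$ is surjective. Assume the compilation chain satisfies $\mathit{CC}^{\sim}$, and let $\phi_S\in\mathit{uco}(2^{\mathit{Trace}_S^\circ})$ and $\rho_S\in\mathit{uco}(2^{\mathit{Trace}_S^\bullet})$. If a source program $W$ satisfies $\mathit{ANI}[\phi_S,\rho_S]$, then $W{\downarrow}$ satisfies $\mathit{ANI}[\phi_T^\#,\rho_T^\#]$, where $\phi_T^\# = g^\circ\circ\phi_S\circ f^\circ$, $\rho_T^\# = g^\bullet\circ\rho_S\circ f^\bullet$, with $f^\circ(\pi_T^\circ)=\{s^\circ\mid\exists t^\circ\in\pi_T^\circ.\ s^\circ\overset{\circ}{\sim}t^\circ\}$, $g^\circ(\pi_S^\circ)=\{t^\circ\mid\forall s^\circ.\ s^\circ\overset{\circ}{\sim}t^\circ\Rightarrow s^\circ\in\pi_S^\circ\}$, and $f^\bullet,g^\bullet$ defined analogously using $\overset{\bullet}{\sim}$ and output projections.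
   Context: A compilation chain consists of source (whole) programs $W$, target programs, sets $\mathit{Trace}_S,\mathit{Trace}_T$ of source and target traces, semantics relations $W\rightsquigarrow t$ (W can produce $t$) at both levels, and a compiler $W\mapsto W{\downarrow}$; $\mathit{beh}(W)=\{t\mid W\rightsquigarrow t\}$, and $W$ satisfies a hyperproperty $H$ (set of sets of traces) iff $\mathit{beh}(W)\in H$. $\mathit{CC}^{\sim}$ states: for every $W$ and $t$, if $W{\downarrow}\rightsquigarrow t$ then there is $s\sim t$ with $W\rightsquigarrow s$. Each trace $t$ has a disjoint input projection $t^\circ$ and output projection $t^\bullet$; $\mathit{Trace}^\circ$, $\mathit{Trace}^\bullet$ denote the sets of input and output projections. "$\overset{\circ}{\sim}$ is a total map from target to source" means every target input projection is related to exactly one source input projection; "surjective" means every source input projection is related to some target one. An upper closure operator ($\mathit{uco}$) on a powerset ordered by inclusion is a monotone, idempotent, extensive map. Abstract noninterference: $\mathit{ANI}[\phi,\rho]=\{\pi\mid\forall t_1,t_2\in\pi.\ \phi(t_1^\circ)=\phi(t_2^\circ)\Rightarrow\rho(t_1^\bullet)=\rho(t_2^\bullet)\}$, where $\phi(x)$ abbreviates $\phi(\{x\})$ and similarly for $\rho$. *)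

theory Defs
  imports Main
begin

definition uco :: "('a set \<Rightarrow> 'a set) \<Rightarrow> bool" where
  "uco \<rho> \<longleftrightarrow> mono \<rho> \<and> (\<forall>X. X \<subseteq> \<rho> X) \<and> (\<forall>X. \<rho> (\<rho> X) = \<rho> X)"

definition beh :: "('p \<Rightarrow> 't \<Rightarrow> bool) \<Rightarrow> 'p \<Rightarrow> 't set" where
  "beh sem W = {t. sem W t}"

definition ANI :: "('i set \<Rightarrow> 'i set) \<Rightarrow> ('o set \<Rightarrow> 'o set)
    \<Rightarrow> ('t \<Rightarrow> 'i) \<Rightarrow> ('t \<Rightarrow> 'o) \<Rightarrow> 't set set" where
  "ANI \<phi> \<rho> inp outp =
     {\<pi>. \<forall>t1\<in>\<pi>. \<forall>t2\<in>\<pi>. \<phi> {inp t1} = \<phi> {inp t2} \<longrightarrow> \<rho> {outp t1} = \<rho> {outp t2}}"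

definition fmap :: "('s \<Rightarrow> 't \<Rightarrow> bool) \<Rightarrow> 't set \<Rightarrow> 's set" where
  "fmap rel X = {s. \<exists>t\<in>X. rel s t}"

definition gmap :: "('s \<Rightarrow> 't \<Rightarrow> bool) \<Rightarrow> 's set \<Rightarrow> 't set" where
  "gmap rel Y = {t. \<forall>s. rel s t \<longrightarrow> s \<in> Y}"

definition CC :: "('ps \<Rightarrow> 'st \<Rightarrow> bool) \<Rightarrow> ('pt \<Rightarrow> 'tt \<Rightarrow> bool) \<Rightarrow> ('ps \<Rightarrow> 'pt)
    \<Rightarrow> ('st \<Rightarrow> 'tt \<Rightarrow> bool) \<Rightarrow> bool" where
  "CC semS semT cmp sim \<longleftrightarrow> (\<forall>W t. semT (cmp W) t \<longrightarrow> (\<exists>s. sim s t \<and> semS W s))"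

end

theory Submission
  imports Defs
begin

text \<open>
  Every target trace t of W\<down> has, by CC, a source witness s of W with s\<degree> \<sim> t\<degree> and
  s\<bullet> \<sim> t\<bullet>. As \<sim> is a map from target to source, f sends the singleton of t\<degree> to that
  of s\<degree>, so the target abstractions of t are g applied to the source abstractions of s.
  Surjectivity of the input relation makes f a left inverse of g, hence g injective: equal
  target input abstractions come from equal source input abstractions, noninterference of W
  equates the source output abstractions, and applying g transports this back to the target.
\<close>

lemma fmap_singleton:
  assumes "left_unique rel" and "rel s t"
  shows "fmap rel {t} = {s}"
  using assms unfolding fmap_def left_unique_def by blast

lemma fmap_gmap:
  assumes "left_unique rel" and "left_total rel"
  shows "fmap rel (gmap rel Y) = Y"
  using assms unfolding fmap_def gmap_def left_unique_def left_total_def by blast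

lemma inj_gmap:
  assumes "left_unique rel" and "left_total rel"
  shows "inj (gmap rel)"
  by (rule inj_on_inverseI[where g = "fmap rel"]) (use assms fmap_gmap in blast)

lemma gmap_comp_fmap_singleton:
  assumes "left_unique rel" and "rel s t"
  shows "(gmap rel \<circ> \<alpha> \<circ> fmap rel) {t} = gmap rel (\<alpha> {s})"
  using fmap_singleton[OF assms] by simp

lemma CC_preserves_ANI:
  assumes uniqI: "left_unique relI" and totI: "left_total relI" and uniqO: "left_unique relO"
    and cc: "CC semS semT cmp (\<lambda>s t. relI (inS s) (inT t) \<and> relO (outS s) (outT t))"
    and ani: "beh semS W \<in> ANI \<phi> \<rho> inS outS"
  shows "beh semT (cmp W) \<in>
           ANI (gmap relI \<circ> \<phi> \<circ> fmap relI) (gmap relO \<circ> \<rho> \<circ> fmap relO) inT outT"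
  unfolding ANI_def
proof (intro CollectI ballI impI)
  fix t1 t2
  assume t1: "t1 \<in> beh semT (cmp W)" and t2: "t2 \<in> beh semT (cmp W)"
    and in_eq: "(gmap relI \<circ> \<phi> \<circ> fmap relI) {inT t1} = (gmap relI \<circ> \<phi> \<circ> fmap relI) {inT t2}"
  obtain s1 where s1: "relI (inS s1) (inT t1)" "relO (outS s1) (outT t1)" "s1 \<in> beh semS W"
    using cc t1 unfolding CC_def beh_def by blast
  obtain s2 where s2: "relI (inS s2) (inT t2)" "relO (outS s2) (outT t2)" "s2 \<in> beh semS W"
    using cc t2 unfolding CC_def beh_def by blast
  have "gmap relI (\<phi> {inS s1}) = gmap relI (\<phi> {inS s2})"
    using in_eq by (simp only: gmap_comp_fmap_singleton[OF uniqI s1(1)]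
                               gmap_comp_fmap_singleton[OF uniqI s2(1)])
  then have "\<phi> {inS s1} = \<phi> {inS s2}"
    by (rule injD[OF inj_gmap[OF uniqI totI]])
  then have "\<rho> {outS s1} = \<rho> {outS s2}"
    using ani s1(3) s2(3) unfolding ANI_def by blast
  then show "(gmap relO \<circ> \<rho> \<circ> fmap relO) {outT t1} = (gmap relO \<circ> \<rho> \<circ> fmap relO) {outT t2}"
    by (simp only: gmap_comp_fmap_singleton[OF uniqO s1(2)]
                   gmap_comp_fmap_singleton[OF uniqO s2(2)])
qed

theorem theorem4p1:
  fixes semS :: "'ps \<Rightarrow> 'st \<Rightarrow> bool" and semT :: "'pt \<Rightarrow> 'tt \<Rightarrow> bool"
    and cmp :: "'ps \<Rightarrow> 'pt"
    and inS :: "'st \<Rightarrow> 'si" and outS :: "'st \<Rightarrow> 'so"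
    and inT :: "'tt \<Rightarrow> 'ti" and outT :: "'tt \<Rightarrow> 'to"
    and relI :: "'si \<Rightarrow> 'ti \<Rightarrow> bool" and relO :: "'so \<Rightarrow> 'to \<Rightarrow> bool"
    and \<phi>S :: "'si set \<Rightarrow> 'si set" and \<rho>S :: "'so set \<Rightarrow> 'so set"
    and W :: 'ps
  assumes "surj inS" and "surj outS" and "surj inT" and "surj outT"
    and relI_total: "\<forall>ti. \<exists>!si. relI si ti"
    and relO_total: "\<forall>to. \<exists>!so. relO so to"
    and relI_surj: "\<forall>si. \<exists>ti. relI si ti"
    and cc: "CC semS semT cmp (\<lambda>s t. relI (inS s) (inT t) \<and> relO (outS s) (outT t))"
    and "uco \<phi>S" and "uco \<rho>S"
    and "beh semS W \<in> ANI \<phi>S \<rho>S inS outS"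
  shows "beh semT (cmp W) \<in>
           ANI (gmap relI \<circ> \<phi>S \<circ> fmap relI) (gmap relO \<circ> \<rho>S \<circ> fmap relO) inT outT"
proof -
  have "left_unique relI"
    using relI_total by (metis left_uniqueI)
  moreover have "left_total relI"
    using relI_surj by (simp add: left_total_def)
  moreover have "left_unique relO"
    using relO_total by (metis left_uniqueI)
  ultimately show ?thesis
    using cc \<open>beh semS W \<in> ANI \<phi>S \<rho>S inS outS\<close> by (rule CC_preserves_ANI)
qed

end
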